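(* Let $K$ be an infinite field and $p=[p_1\exp_{\lambda^{(1)}},\dots,p_m\exp_{\lambda^{(m)}}]^T$ with $p_i\in A=K[t_1,\dots,t_n]$ and $\lambda^{(i)}\in(K\setminus\{0\})^n$. Partition $\{1,\dots,m\}=K_1\,\dot\cup\cdots\dot\cup\,K_l$ into classes of indices with equal exponent vector, $K_i=\{k_{i1}<\dots<k_{il_i}\}$, with common exponent $\mu^i:=\lambda^{(k_{i1})}$. Put $h_i=[p_{k_{i1}},\dots,p_{k_{il_i}}]^T\in A^{l_i}$, $H_i=\chi_{\mu^i}(\ker(\kappa_{h_i}))\subseteq\mathcal S_n^{1\times l_i}$ ($\chi_{\mu^i}$ applied entrywise), and $\phi_i:\mathcal S_n^{1\times l_i}\to\mathcal S_n^{1\times m}$, $[a_1,\dots,a_{l_i}]\mapsto\sum_ja_je_{k_{ij}}$. Then $$\{a\in\mathcal S_n^{1\times m}:\textstyle\sum_{j=1}^ma_j\bullet(p_j\exp_{\lambda^{(j)}})=0\}=\bigoplus_{i=1}^l\phi_i(H_i),$$ and a matrix whose rows generate this module is a kernel representation of the VMPUM of $\{p\}$.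
   Context: $\mathcal S_n=K[t_1,\dots,t_n][\Delta_1;\sigma_1,\delta_1]\cdots[\Delta_n;\sigma_n,\delta_n]$ is the $n$-th difference algebra, $\sigma_i(p)(t)=p(t+e_i)$, $\delta_i=\sigma_i-\mathrm{id}$ (so $\Delta_it_i=t_i\Delta_i+\Delta_i+1$, $\Delta_it_j=t_j\Delta_i$ for $i\neq j$, $\Delta_i$ commuting). It acts on $K^{\mathbb N_0^n}$ by $(\Delta_i\bullet f)(t)=f(t+e_i)-f(t)$ and multiplication by $t_i$; polynomials are identified with polynomial functions. $\exp_\lambda(t)=\lambda_1^{t_1}\cdots\lambda_n^{t_n}$. For $q\in A^k$, $\ker(\kappa_q)=\{a\in\mathcal S_n^{1\times k}:\sum_ia_i\bullet q_i=0\}$. For $\lambda\in(K\setminus\{0\})^n$, $\chi_\lambda$ is the $K$-algebra automorphism of $\mathcal S_n$ with $t_i\mapsto t_i$, $\Delta_i\mapsto\frac1{\lambda_i}(\Delta_i-\lambda_i+1)$. $e_k$ are canonical basis vectors of $\mathcal S_n^{1\times m}$. The VMPUM of a set of signals is the smallest solution set $\{g:R\bullet g=0\}$ ($R$ a matrix over $\mathcal S_n$) containing it. *)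

theory Defs
  imports Main "HOL-Library.Poly_Mapping"
begin

text \<open>
 Variables are indexed by a finite type 'n (so n = CARD('n)); exponent vectors
 and points of N_0^n are functions 'n => nat.

 Elements of S_n are represented in the normal form  sum c_(alpha,beta) t^alpha E^beta,
 where E_i = Delta_i + 1 is the shift (E_i p = sigma_i(p) E_i).  Since Delta_i = E_i - 1,
 this is the same algebra as K[t][Delta_1;sigma_1,delta_1]...[Delta_n;sigma_n,delta_n],
 only written in the basis t^alpha (Delta+1)^beta instead of t^alpha Delta^beta.
\<close>

type_synonym ('n, 'a) mpoly = "('n \<Rightarrow> nat) \<Rightarrow>\<^sub>0 'a"
type_synonym ('n, 'a) sop = "(('n \<Rightarrow> nat) \<times> ('n \<Rightarrow> nat)) \<Rightarrow>\<^sub>0 'a"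
type_synonym ('n, 'a) signal = "('n \<Rightarrow> nat) \<Rightarrow> 'a"

definition tpow :: "('n::finite \<Rightarrow> 'a::comm_ring_1) \<Rightarrow> ('n \<Rightarrow> nat) \<Rightarrow> 'a" where
  "tpow x \<alpha> = (\<Prod>i\<in>UNIV. x i ^ \<alpha> i)"

definition polyfun :: "('n::finite, 'a::comm_ring_1) mpoly \<Rightarrow> ('n, 'a) signal" where
  "polyfun p x = (\<Sum>\<alpha>\<in>Poly_Mapping.keys p. Poly_Mapping.lookup p \<alpha> * tpow (\<lambda>i. of_nat (x i)) \<alpha>)"

definition expfun :: "('n::finite \<Rightarrow> 'a::comm_ring_1) \<Rightarrow> ('n, 'a) signal" where
  "expfun lam x = tpow lam x"

text \<open>product of monomials: (c t^alpha E^beta)(t^gamma E^delta) = c t^alpha (t+beta)^gamma E^(beta+delta)\<close>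
definition mon_mult :: "'a::comm_ring_1 \<Rightarrow> ('n::finite \<Rightarrow> nat) \<times> ('n \<Rightarrow> nat)
    \<Rightarrow> ('n \<Rightarrow> nat) \<times> ('n \<Rightarrow> nat) \<Rightarrow> ('n, 'a) sop" where
  "mon_mult c m1 m2 = (case m1 of (\<alpha>, \<beta>) \<Rightarrow> case m2 of (\<gamma>, \<delta>) \<Rightarrow>
     (\<Sum>\<kappa>\<in>{\<kappa>. \<forall>i. \<kappa> i \<le> \<gamma> i}.
        Poly_Mapping.single (\<lambda>i. \<alpha> i + \<kappa> i, \<lambda>i. \<beta> i + \<delta> i)
          (c * (\<Prod>i\<in>UNIV. of_nat (\<gamma> i choose \<kappa> i) * of_nat (\<beta> i) ^ (\<gamma> i - \<kappa> i)))))"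

definition sop_mult :: "('n::finite, 'a::comm_ring_1) sop \<Rightarrow> ('n, 'a) sop \<Rightarrow> ('n, 'a) sop" where
  "sop_mult a b = (\<Sum>u\<in>Poly_Mapping.keys a. \<Sum>v\<in>Poly_Mapping.keys b. mon_mult (Poly_Mapping.lookup a u * Poly_Mapping.lookup b v) u v)"

definition sop_t :: "'n::finite \<Rightarrow> ('n, 'a::comm_ring_1) sop" where
  "sop_t i = Poly_Mapping.single (\<lambda>j. if j = i then 1 else 0, \<lambda>_. 0) 1"
definition sop_E :: "'n::finite \<Rightarrow> ('n, 'a::comm_ring_1) sop" where
  "sop_E i = Poly_Mapping.single (\<lambda>_. 0, \<lambda>j. if j = i then 1 else 0) 1"
definition sop_Delta :: "'n::finite \<Rightarrow> ('n, 'a::comm_ring_1) sop" where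
  "sop_Delta i = sop_E i - Poly_Mapping.single (\<lambda>_. 0, \<lambda>_. 0) 1"

definition sop_act :: "('n::finite, 'a::comm_ring_1) sop \<Rightarrow> ('n, 'a) signal \<Rightarrow> ('n, 'a) signal" where
  "sop_act a f = (\<lambda>x. \<Sum>u\<in>Poly_Mapping.keys a. Poly_Mapping.lookup a u * tpow (\<lambda>i. of_nat (x i)) (fst u)
                        * f (\<lambda>i. x i + snd u i))"

text \<open>chi_lambda: t_i -> t_i, Delta_i -> (Delta_i - lambda_i + 1)/lambda_i, i.e. E_i -> E_i/lambda_i\<close>
definition chi :: "('n::finite \<Rightarrow> 'a::field) \<Rightarrow> ('n, 'a) sop \<Rightarrow> ('n, 'a) sop" where
  "chi lam a = (\<Sum>u\<in>Poly_Mapping.keys a. Poly_Mapping.single u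
                    (Poly_Mapping.lookup a u * (\<Prod>i\<in>UNIV. inverse (lam i) ^ snd u i)))"

definition rowvecs :: "nat \<Rightarrow> (nat \<Rightarrow> ('n::finite, 'a::comm_ring_1) sop) set" where
  "rowvecs l = {a. \<forall>j. j \<notin> {1..l} \<longrightarrow> a j = 0}"

definition ker_kappa :: "nat \<Rightarrow> (nat \<Rightarrow> ('n::finite, 'a::comm_ring_1) signal)
     \<Rightarrow> (nat \<Rightarrow> ('n, 'a) sop) set" where
  "ker_kappa k q = {a \<in> rowvecs k. (\<lambda>x. \<Sum>j=1..k. sop_act (a j) (q j) x) = (\<lambda>x. 0)}"

definition chi_vec :: "('n::finite \<Rightarrow> 'a::field) \<Rightarrow> (nat \<Rightarrow> ('n, 'a) sop) \<Rightarrow> (nat \<Rightarrow> ('n, 'a) sop)" where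
  "chi_vec lam a = (\<lambda>j. chi lam (a j))"

definition index_classes :: "nat \<Rightarrow> (nat \<Rightarrow> 'b) \<Rightarrow> nat set set" where
  "index_classes m lam = {{k \<in> {1..m}. lam k = lam j} | j. j \<in> {1..m}}"

definition enum :: "nat set \<Rightarrow> nat \<Rightarrow> nat" where
  "enum C j = sorted_list_of_set C ! (j - 1)"

definition phi :: "nat set \<Rightarrow> (nat \<Rightarrow> ('n::finite, 'a::comm_ring_1) sop) \<Rightarrow> (nat \<Rightarrow> ('n, 'a) sop)" where
  "phi C a = (\<lambda>k. \<Sum>j\<in>{1..card C}. if enum C j = k then a j else 0)"

definition class_H :: "(nat \<Rightarrow> ('n::finite, 'a::field) mpoly) \<Rightarrow> (nat \<Rightarrow> 'n \<Rightarrow> 'a) \<Rightarrow> nat set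
     \<Rightarrow> (nat \<Rightarrow> ('n, 'a) sop) set" where
  "class_H p lam C = chi_vec (lam (enum C 1)) ` ker_kappa (card C) (\<lambda>j. polyfun (p (enum C j)))"

definition pvec :: "nat \<Rightarrow> (nat \<Rightarrow> ('n::finite, 'a::comm_ring_1) mpoly) \<Rightarrow> (nat \<Rightarrow> 'n \<Rightarrow> 'a)
     \<Rightarrow> nat \<Rightarrow> ('n, 'a) signal" where
  "pvec m p lam = (\<lambda>j. if j \<in> {1..m} then (\<lambda>x. polyfun (p j) x * expfun (lam j) x) else (\<lambda>x. 0))"

definition behav :: "nat \<Rightarrow> nat \<Rightarrow> (nat \<Rightarrow> nat \<Rightarrow> ('n::finite, 'a::comm_ring_1) sop)
     \<Rightarrow> (nat \<Rightarrow> ('n, 'a) signal) set" where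
  "behav g m R = {w. (\<forall>j. j \<notin> {1..m} \<longrightarrow> w j = (\<lambda>x. 0)) \<and>
      (\<forall>r\<in>{1..g}. (\<lambda>x. \<Sum>j=1..m. sop_act (R r j) (w j) x) = (\<lambda>x. 0))}"

definition row_module :: "nat \<Rightarrow> nat \<Rightarrow> (nat \<Rightarrow> nat \<Rightarrow> ('n::finite, 'a::comm_ring_1) sop)
     \<Rightarrow> (nat \<Rightarrow> ('n, 'a) sop) set" where
  "row_module g m R = {(\<lambda>j. if j \<in> {1..m} then (\<Sum>r=1..g. sop_mult (c r) (R r j)) else 0) | c. True}"

definition is_vmpum_kernel_rep :: "nat \<Rightarrow> nat \<Rightarrow> (nat \<Rightarrow> nat \<Rightarrow> ('n::finite, 'a::comm_ring_1) sop)
     \<Rightarrow> (nat \<Rightarrow> ('n, 'a) signal) \<Rightarrow> bool" where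
  "is_vmpum_kernel_rep g m R w \<longleftrightarrow> w \<in> behav g m R \<and>
     (\<forall>g' R'. w \<in> behav g' m R' \<longrightarrow> behav g m R \<subseteq> behav g' m R')"

end

theory Submission
  imports Defs "HOL-Library.FuncSet"
begin

text \<open>
  Write \<open>\<mu>\<^sub>C\<close> for the common exponent vector of an index class C.
  Acting with an operator a on \<open>q \<cdot> exp\<^sub>\<mu>\<close> gives \<open>exp\<^sub>\<mu> \<cdot> (\<chi>\<^bsub>1/\<mu>\<^esub>(a) \<bullet> q)\<close>, so the
  condition \<open>\<Sum>\<^sub>j a\<^sub>j \<bullet> (p\<^sub>j exp\<^sub>\<lambda>\<^sub>j) = 0\<close> becomes \<open>\<Sum>\<^sub>C exp\<^sub>\<mu>\<^sub>C \<cdot> G\<^sub>C = 0\<close>, where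
  \<open>G\<^sub>C = \<Sum>\<^sub>k\<^sub>\<in>\<^sub>C \<chi>\<^bsub>1/\<mu>\<^sub>C\<^esub>(a\<^sub>k) \<bullet> p\<^sub>k\<close> is again annihilated by a power of every difference
  operator.  Exponentials with pairwise distinct exponent vectors are linearly
  independent over such signals, hence every \<open>G\<^sub>C\<close> vanishes separately.  Thus the
  kernel consists of the rows whose restriction to each class C lies in a module
  \<open>V\<^sub>C\<close> supported on C, and \<open>V\<^sub>C\<close> is exactly \<open>\<phi>\<^sub>C(H\<^sub>C)\<close> (reindex C by \<open>enum C\<close> and undo
  \<open>\<chi>\<close>).  An abstract lemma on partitions turns this into the direct sum
  decomposition.  Finally, for any signal vector w, a matrix whose rows generate
  \<open>ker(\<kappa>\<^sub>w)\<close> is a kernel representation of the smallest solution set containing w.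
\<close>

section \<open>The action of the difference algebra\<close>

definition mon_act :: "('n::finite \<Rightarrow> nat) \<times> ('n \<Rightarrow> nat) \<Rightarrow> ('n, 'a::comm_ring_1) signal \<Rightarrow> ('n, 'a) signal" where
  "mon_act u f = (\<lambda>x. tpow (\<lambda>i. of_nat (x i)) (fst u) * f (\<lambda>i. x i + snd u i))"

lemma sop_act_superset:
  assumes "finite S" "Poly_Mapping.keys a \<subseteq> S"
  shows "sop_act a f x = (\<Sum>u\<in>S. Poly_Mapping.lookup a u * mon_act u f x)"
  unfolding sop_act_def mon_act_def mult.assoc
  by (rule sum.mono_neutral_left) (use assms in \<open>auto simp: in_keys_iff\<close>)

lemma sop_act_as_sum: "sop_act b f = (\<lambda>y. \<Sum>v\<in>Poly_Mapping.keys b. Poly_Mapping.lookup b v * mon_act v f y)"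
  by (rule ext, rule sop_act_superset) auto

lemma sop_act_add: "sop_act (a + b) f x = sop_act a f x + sop_act b f x"
proof -
  let ?S = "Poly_Mapping.keys a \<union> Poly_Mapping.keys b"
  have S: "finite ?S" by simp
  have "sop_act (a + b) f x = (\<Sum>u\<in>?S. Poly_Mapping.lookup (a + b) u * mon_act u f x)"
    by (rule sop_act_superset[OF S]) (rule keys_add)
  also have "\<dots> = (\<Sum>u\<in>?S. Poly_Mapping.lookup a u * mon_act u f x)
                 + (\<Sum>u\<in>?S. Poly_Mapping.lookup b u * mon_act u f x)"
    unfolding lookup_add distrib_right sum.distrib ..
  also have "\<dots> = sop_act a f x + sop_act b f x"
    using sop_act_superset[OF S, of a f x] sop_act_superset[OF S, of b f x] by simp
  finally show ?thesis .
qed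

lemma sop_act_zero [simp]: "sop_act 0 f x = 0"
  by (simp add: sop_act_def)

lemma sop_act_sum: "sop_act (\<Sum>s\<in>A. a s) f x = (\<Sum>s\<in>A. sop_act (a s) f x)"
  by (induction A rule: infinite_finite_induct) (simp_all add: sop_act_add)

lemma sop_act_single: "sop_act (Poly_Mapping.single u c) f x = c * mon_act u f x"
  by (subst sop_act_superset[of "{u}"]) auto

lemma sop_act_one: "sop_act (Poly_Mapping.single (\<lambda>_. 0, \<lambda>_. 0) 1) f x = f x"
  by (simp add: sop_act_single mon_act_def tpow_def)

lemma sop_act_signal_sum: "sop_act a (\<lambda>y. \<Sum>j\<in>J. f j y) x = (\<Sum>j\<in>J. sop_act a (f j) x)"
  unfolding sop_act_def sum_distrib_left by (rule sum.swap)

lemma sop_act_signal_zero: "sop_act a (\<lambda>y. 0) x = 0"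
  unfolding sop_act_def by simp

lemma tpow_add: "tpow x (\<lambda>i. a i + b i) = tpow x a * tpow x b"
  unfolding tpow_def by (simp add: power_add prod.distrib)

text \<open>Multivariate binomial theorem: expansion of \<open>(x + \<beta>)\<^sup>\<gamma>\<close>, which underlies the
  commutation rule \<open>E\<^sup>\<beta> t\<^sup>\<gamma> = (t + \<beta>)\<^sup>\<gamma> E\<^sup>\<beta>\<close> encoded in mon_mult.\<close>
lemma tpow_shift_binom:
  "tpow (\<lambda>i. of_nat (x i + \<beta> i) :: 'a::comm_ring_1) \<gamma> =
   (\<Sum>\<kappa>\<in>{\<kappa>. \<forall>i. \<kappa> i \<le> \<gamma> i}. (\<Prod>i\<in>UNIV. of_nat (\<gamma> i choose \<kappa> i) * of_nat (\<beta> i) ^ (\<gamma> i - \<kappa> i))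
                                 * tpow (\<lambda>i. of_nat (x i)) \<kappa>)"
proof -
  have "tpow (\<lambda>i. of_nat (x i + \<beta> i) :: 'a) \<gamma> =
      (\<Prod>i\<in>UNIV. \<Sum>k\<in>{..\<gamma> i}. of_nat (\<gamma> i choose k) * of_nat (\<beta> i) ^ (\<gamma> i - k) * of_nat (x i) ^ k)"
    unfolding tpow_def of_nat_add binomial_ring
    by (intro prod.cong sum.cong refl) (simp only: mult.assoc mult.commute[of "of_nat (x _) ^ _"])
  also have "\<dots> = (\<Sum>\<kappa>\<in>PiE UNIV (\<lambda>i. {..\<gamma> i}).
      \<Prod>i\<in>UNIV. of_nat (\<gamma> i choose \<kappa> i) * of_nat (\<beta> i) ^ (\<gamma> i - \<kappa> i) * of_nat (x i) ^ \<kappa> i)"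
    by (rule prod_sum_PiE) auto
  also have "PiE UNIV (\<lambda>i. {..\<gamma> i}) = {\<kappa>. \<forall>i. \<kappa> i \<le> \<gamma> i}"
    by (auto simp: PiE_UNIV_domain)
  finally show ?thesis unfolding tpow_def by (simp add: prod.distrib)
qed

lemma sop_act_mon_mult: "sop_act (mon_mult c u v) f x = c * mon_act u (mon_act v f) x"
proof -
  obtain \<alpha> \<beta> where u: "u = (\<alpha>, \<beta>)" by (cases u)
  obtain \<gamma> \<delta> where v: "v = (\<gamma>, \<delta>)" by (cases v)
  let ?K = "{\<kappa>. \<forall>i. \<kappa> i \<le> \<gamma> i}"
  have "sop_act (mon_mult c u v) f x =
      (\<Sum>\<kappa>\<in>?K. c * (\<Prod>i\<in>UNIV. of_nat (\<gamma> i choose \<kappa> i) * of_nat (\<beta> i) ^ (\<gamma> i - \<kappa> i))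
        * (tpow (\<lambda>i. of_nat (x i)) \<alpha> * tpow (\<lambda>i. of_nat (x i)) \<kappa>) * f (\<lambda>i. x i + (\<beta> i + \<delta> i)))"
    unfolding mon_mult_def u v by (simp add: sop_act_sum sop_act_single mon_act_def tpow_add mult.assoc)
  also have "\<dots> = c * (tpow (\<lambda>i. of_nat (x i)) \<alpha> *
                  (tpow (\<lambda>i. of_nat (x i + \<beta> i)) \<gamma> * f (\<lambda>i. x i + (\<beta> i + \<delta> i))))"
    unfolding tpow_shift_binom sum_distrib_left sum_distrib_right
    by (rule sum.cong) (simp_all only: mult_ac)
  finally show ?thesis unfolding u v mon_act_def by (simp add: add.assoc)
qed

lemma sop_act_mult: "sop_act (sop_mult a b) f x = sop_act a (sop_act b f) x"
proof -
  have mon_act_lin: "mon_act u (\<lambda>y. \<Sum>v\<in>V. c v * g v y) x = (\<Sum>v\<in>V. c v * mon_act u (g v) x)"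
    for u V c g
    unfolding mon_act_def sum_distrib_left by (simp add: mult_ac)
  have "sop_act (sop_mult a b) f x = (\<Sum>u\<in>Poly_Mapping.keys a. \<Sum>v\<in>Poly_Mapping.keys b.
      Poly_Mapping.lookup a u * (Poly_Mapping.lookup b v * mon_act u (mon_act v f) x))"
    unfolding sop_mult_def by (simp add: sop_act_sum sop_act_mon_mult mult.assoc)
  also have "\<dots> = (\<Sum>u\<in>Poly_Mapping.keys a. Poly_Mapping.lookup a u * mon_act u (sop_act b f) x)"
    unfolding sop_act_as_sum[of b f] mon_act_lin sum_distrib_left ..
  also have "\<dots> = sop_act a (sop_act b f) x"
    by (rule sop_act_superset[symmetric]) auto
  finally show ?thesis .
qed

section \<open>The automorphism \<open>\<chi>\<^sub>\<lambda>\<close> and exponential signals\<close>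

definition chi_weight :: "('n::finite \<Rightarrow> 'a::field) \<Rightarrow> ('n \<Rightarrow> nat) \<times> ('n \<Rightarrow> nat) \<Rightarrow> 'a" where
  "chi_weight lam u = (\<Prod>i\<in>UNIV. inverse (lam i) ^ snd u i)"

lemma lookup_chi: "Poly_Mapping.lookup (chi lam a) v = Poly_Mapping.lookup a v * chi_weight lam v"
proof -
  have "Poly_Mapping.lookup (chi lam a) v =
      (\<Sum>u\<in>Poly_Mapping.keys a. if u = v then Poly_Mapping.lookup a u * chi_weight lam u else 0)"
    unfolding chi_def lookup_sum chi_weight_def
    by (intro sum.cong refl) (simp add: lookup_single when_def)
  also have "\<dots> = Poly_Mapping.lookup a v * chi_weight lam v"
    by (simp add: in_keys_iff)
  finally show ?thesis .
qed

lemma chi_inverse_left: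
  assumes "\<forall>i. lam i \<noteq> 0"
  shows "chi lam (chi (\<lambda>i. inverse (lam i)) a) = a"
proof (rule poly_mapping_eqI)
  fix v
  have "chi_weight (\<lambda>i. inverse (lam i)) v * chi_weight lam v = 1"
    using assms unfolding chi_weight_def by (simp add: prod.distrib[symmetric] power_mult_distrib[symmetric])
  thus "Poly_Mapping.lookup (chi lam (chi (\<lambda>i. inverse (lam i)) a)) v = Poly_Mapping.lookup a v"
    by (simp add: lookup_chi mult.assoc)
qed

lemma chi_inverse_right:
  assumes "\<forall>i. lam i \<noteq> 0"
  shows "chi (\<lambda>i. inverse (lam i)) (chi lam a) = a"
  using chi_inverse_left[of "\<lambda>i. inverse (lam i)" a] assms by simp

lemma expfun_shift: "expfun lam (\<lambda>i. x i + b i) = expfun lam x * (\<Prod>i\<in>UNIV. lam i ^ b i)"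
  unfolding expfun_def tpow_def by (simp add: power_add prod.distrib)

lemma sop_act_exp:
  fixes lam :: "'n::finite \<Rightarrow> 'a::field"
  shows "sop_act a (\<lambda>y. f y * expfun lam y) x = expfun lam x * sop_act (chi (\<lambda>i. inverse (lam i)) a) f x"
proof -
  have w: "chi_weight (\<lambda>i. inverse (lam i)) u = (\<Prod>i\<in>UNIV. lam i ^ snd u i)" for u
    unfolding chi_weight_def by simp
  have "sop_act a (\<lambda>y. f y * expfun lam y) x = (\<Sum>u\<in>Poly_Mapping.keys a.
      expfun lam x * (Poly_Mapping.lookup a u * chi_weight (\<lambda>i. inverse (lam i)) u * mon_act u f x))"
    unfolding sop_act_def mon_act_def expfun_shift w by (intro sum.cong refl) (simp add: mult_ac)
  also have "\<dots> = expfun lam x * sop_act (chi (\<lambda>i. inverse (lam i)) a) f x"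
    unfolding sum_distrib_left[symmetric]
    by (subst sop_act_superset[of "Poly_Mapping.keys a"]) (auto simp: lookup_chi in_keys_iff)
  finally show ?thesis .
qed


section \<open>Signals annihilated by powers of the difference operators\<close>

definition diff_op :: "'n \<Rightarrow> ('n, 'a::comm_ring_1) signal \<Rightarrow> ('n, 'a) signal" where
  "diff_op i g = (\<lambda>x. g (x(i := Suc (x i))) - g x)"

text \<open>Signals on which every \<open>\<Delta>\<^sub>i\<close> acts nilpotently; polynomial functions, and all
  their images under the action of \<open>S\<^sub>n\<close>, are of this kind.\<close>
definition nilpotent_signals :: "('n::finite, 'a::comm_ring_1) signal set" where
  "nilpotent_signals = {g. \<forall>i. \<exists>N. (diff_op i ^^ N) g = (\<lambda>x. 0)}"

lemma diff_op_pow_Suc_apply: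
  "(diff_op i ^^ Suc N) g x = (diff_op i ^^ N) g (x(i := Suc (x i))) - (diff_op i ^^ N) g x"
  by (simp add: diff_op_def)

lemma diff_op_pow_zero: "(diff_op i ^^ N) (\<lambda>x. 0) = (\<lambda>x. 0)"
  by (induction N) (simp_all add: diff_op_pow_Suc_apply fun_eq_iff del: funpow.simps)

lemma diff_op_pow_add: "(diff_op i ^^ N) (\<lambda>x. f x + g x) = (\<lambda>x. (diff_op i ^^ N) f x + (diff_op i ^^ N) g x)"
  by (induction N) (simp_all add: diff_op_pow_Suc_apply fun_eq_iff algebra_simps del: funpow.simps)

lemma diff_op_pow_scale: "(diff_op i ^^ N) (\<lambda>x. c * f x) = (\<lambda>x. c * (diff_op i ^^ N) f x)"
  by (induction N) (simp_all add: diff_op_pow_Suc_apply fun_eq_iff algebra_simps del: funpow.simps)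

lemma diff_op_pow_mono:
  assumes "(diff_op i ^^ N) g = (\<lambda>x. 0)" "N \<le> M"
  shows "(diff_op i ^^ M) g = (\<lambda>x. 0)"
proof -
  have "(diff_op i ^^ M) g = (diff_op i ^^ (M - N)) ((diff_op i ^^ N) g)"
    using assms(2) by (metis comp_apply funpow_add le_add_diff_inverse2)
  thus ?thesis using assms(1) by (simp add: diff_op_pow_zero)
qed

lemma diff_op_pow_shift:
  "(diff_op i ^^ N) (\<lambda>x. f (\<lambda>j. x j + b j)) = (\<lambda>x. (diff_op i ^^ N) f (\<lambda>j. x j + b j))"
proof (induction N)
  case 0 thus ?case by simp
next
  case (Suc N)
  have upd: "(\<lambda>j. (if j = i then Suc (x i) else x j) + b j) = (\<lambda>j. x j + b j)(i := Suc (x i + b i))" for x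
    by (rule ext) auto
  show ?case by (simp add: diff_op_pow_Suc_apply Suc upd fun_eq_iff del: funpow.simps)
qed

lemma diff_op_pow_mulx_other:
  "i \<noteq> j \<Longrightarrow> (diff_op i ^^ N) (\<lambda>x. of_nat (x j) * f x) = (\<lambda>x. of_nat (x j) * (diff_op i ^^ N) f x)"
  by (induction N) (simp_all add: diff_op_pow_Suc_apply fun_eq_iff algebra_simps del: funpow.simps)

lemma diff_op_pow_mulx_same:
  "(diff_op i ^^ Suc k) (\<lambda>x. of_nat (x i) * f x) =
   (\<lambda>x. of_nat (x i) * (diff_op i ^^ Suc k) f x + of_nat (Suc k) * (diff_op i ^^ k) f (x(i := Suc (x i))))"
proof (induction k)
  case 0 show ?case by (simp add: diff_op_def fun_eq_iff algebra_simps fun_upd_def)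
next
  case (Suc k)
  have "(diff_op i ^^ Suc (Suc k)) (\<lambda>x. of_nat (x i) * f x) = diff_op i ((diff_op i ^^ Suc k) (\<lambda>x. of_nat (x i) * f x))"
    by simp
  also have "\<dots> = (\<lambda>x. of_nat (x i) * (diff_op i ^^ Suc (Suc k)) f x
                      + of_nat (Suc (Suc k)) * (diff_op i ^^ Suc k) f (x(i := Suc (x i))))"
    unfolding Suc by (rule ext) (simp add: diff_op_def algebra_simps)
  finally show ?case .
qed

lemma nilpotent_const: "(\<lambda>x. c) \<in> nilpotent_signals"
  unfolding nilpotent_signals_def by (auto intro!: exI[of _ 1] simp: diff_op_def)

lemma nilpotent_add:
  assumes "f \<in> nilpotent_signals" "g \<in> nilpotent_signals"
  shows "(\<lambda>x. f x + g x) \<in> nilpotent_signals"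
  unfolding nilpotent_signals_def mem_Collect_eq
proof
  fix i
  obtain N1 where N1: "(diff_op i ^^ N1) f = (\<lambda>x. 0)" using assms(1) unfolding nilpotent_signals_def by blast
  obtain N2 where N2: "(diff_op i ^^ N2) g = (\<lambda>x. 0)" using assms(2) unfolding nilpotent_signals_def by blast
  have "(diff_op i ^^ max N1 N2) f = (\<lambda>x. 0)" "(diff_op i ^^ max N1 N2) g = (\<lambda>x. 0)"
    using diff_op_pow_mono[OF N1] diff_op_pow_mono[OF N2] by auto
  thus "\<exists>N. (diff_op i ^^ N) (\<lambda>x. f x + g x) = (\<lambda>x. 0)"
    by (intro exI[of _ "max N1 N2"]) (simp add: diff_op_pow_add)
qed

lemma nilpotent_scale: "f \<in> nilpotent_signals \<Longrightarrow> (\<lambda>x. c * f x) \<in> nilpotent_signals"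
  unfolding nilpotent_signals_def by (auto simp: diff_op_pow_scale) (metis mult_zero_right)

lemma nilpotent_sum:
  "(\<And>s. s \<in> A \<Longrightarrow> F s \<in> nilpotent_signals) \<Longrightarrow> (\<lambda>x. \<Sum>s\<in>A. F s x) \<in> nilpotent_signals"
  by (induction A rule: infinite_finite_induct) (simp_all add: nilpotent_const nilpotent_add)

lemma nilpotent_shift: "f \<in> nilpotent_signals \<Longrightarrow> (\<lambda>x. f (\<lambda>j. x j + b j)) \<in> nilpotent_signals"
  unfolding nilpotent_signals_def by (auto simp: diff_op_pow_shift) (metis)

lemma upd_as_shift: "x(i := Suc (x i)) = (\<lambda>j. x j + (if j = i then 1 else 0))"
  by (rule ext) auto

lemma nilpotent_mulx:
  assumes "f \<in> nilpotent_signals"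
  shows "(\<lambda>x. of_nat (x j) * f x) \<in> nilpotent_signals"
  unfolding nilpotent_signals_def mem_Collect_eq
proof
  fix i
  obtain N where N: "(diff_op i ^^ N) f = (\<lambda>x. 0)"
    using assms unfolding nilpotent_signals_def by blast
  show "\<exists>N. (diff_op i ^^ N) (\<lambda>x. of_nat (x j) * f x) = (\<lambda>x. 0)"
  proof (cases "i = j")
    case True
    thus ?thesis using diff_op_pow_mulx_same[where i=i and k=N and f=f] N
      by (intro exI[of _ "Suc N"]) (simp add: diff_op_def)
  next
    case False
    thus ?thesis using diff_op_pow_mulx_other[OF False, where N=N and f=f] N
      by (intro exI[of _ N]) simp
  qed
qed

lemma nilpotent_powx:
  "f \<in> nilpotent_signals \<Longrightarrow> (\<lambda>x. of_nat (x j) ^ k * f x) \<in> nilpotent_signals"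
proof (induction k)
  case 0 thus ?case by simp
next
  case (Suc k)
  from nilpotent_mulx[OF Suc.IH[OF Suc.prems], of j] show ?case by (simp add: mult.assoc)
qed

lemma nilpotent_tpow:
  assumes "f \<in> nilpotent_signals"
  shows "(\<lambda>x. tpow (\<lambda>i. of_nat (x i)) \<alpha> * (f x :: 'a::comm_ring_1)) \<in> nilpotent_signals"
proof -
  have "(\<lambda>x. (\<Prod>i\<in>S. of_nat (x i) ^ \<alpha> i) * f x) \<in> nilpotent_signals" if "finite S" for S
    using that
  proof (induction S rule: finite_induct)
    case empty thus ?case using assms by simp
  next
    case (insert j S)
    from nilpotent_powx[OF insert.IH, of j "\<alpha> j"] insert.hyps show ?case by (simp add: mult.assoc)
  qed
  thus ?thesis unfolding tpow_def by simp
qed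

lemma nilpotent_polyfun: "polyfun q \<in> nilpotent_signals"
proof -
  have "(\<lambda>x. \<Sum>\<alpha>\<in>Poly_Mapping.keys q. Poly_Mapping.lookup q \<alpha> * (tpow (\<lambda>i. of_nat (x i)) \<alpha> * 1))
        \<in> nilpotent_signals"
    by (intro nilpotent_sum nilpotent_scale nilpotent_tpow nilpotent_const)
  thus ?thesis unfolding polyfun_def[abs_def] by simp
qed

lemma nilpotent_sop_act: "f \<in> nilpotent_signals \<Longrightarrow> sop_act b f \<in> nilpotent_signals"
  unfolding sop_act_as_sum mon_act_def
  by (intro nilpotent_sum nilpotent_scale nilpotent_tpow nilpotent_shift)

section \<open>Linear independence of exponentials over nilpotent signals\<close>

text \<open>On \<open>exp\<^sub>\<mu> g\<close> the operator \<open>E\<^sub>i - \<nu>\<close> acts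
  as \<open>exp\<^sub>\<mu> ((\<mu>\<^sub>i E\<^sub>i - \<nu>) g)\<close>; it kills the nilpotent part belonging to the exponent
  \<open>\<nu>\<close> (for a high power) and is injective on the others.\<close>
definition twisted_diff :: "'a::comm_ring_1 \<Rightarrow> 'a \<Rightarrow> 'n \<Rightarrow> ('n, 'a) signal \<Rightarrow> ('n, 'a) signal" where
  "twisted_diff a b i g = (\<lambda>x. a * g (x(i := Suc (x i))) - b * g x)"

lemma twisted_diff_pow_Suc_apply:
  "(twisted_diff a b i ^^ Suc N) g x =
     a * (twisted_diff a b i ^^ N) g (x(i := Suc (x i))) - b * (twisted_diff a b i ^^ N) g x"
  by (simp add: twisted_diff_def)

lemma expfun_upd: "expfun lam (x(i := Suc (x i))) = lam i * expfun lam (x :: 'n::finite \<Rightarrow> nat)"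
proof -
  have "(\<Prod>j\<in>UNIV. lam j ^ (if j = i then 1 else 0)) = (\<Prod>j\<in>UNIV. if j = i then lam j else 1)"
    by (rule prod.cong) auto
  thus ?thesis unfolding upd_as_shift expfun_shift by (simp add: mult.commute)
qed

lemma twisted_diff_exp:
  "(twisted_diff 1 \<nu> i ^^ N) (\<lambda>x. expfun \<mu> x * g x) = (\<lambda>x. expfun \<mu> x * (twisted_diff (\<mu> i) \<nu> i ^^ N) g x)"
proof (induction N)
  case 0 thus ?case by simp
next
  case (Suc N)
  show ?case
    by (rule ext) (simp only: twisted_diff_pow_Suc_apply Suc, simp add: expfun_upd algebra_simps)
qed

lemma twisted_diff_sum:
  "(twisted_diff a b i ^^ N) (\<lambda>x. \<Sum>c\<in>I. F c x) = (\<lambda>x. \<Sum>c\<in>I. (twisted_diff a b i ^^ N) (F c) x)"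
proof (induction N)
  case 0 thus ?case by simp
next
  case (Suc N)
  show ?case
    by (rule ext) (simp add: twisted_diff_pow_Suc_apply Suc sum_distrib_left sum_subtractf del: funpow.simps)
qed

lemma twisted_diff_pow_zero: "(twisted_diff a b i ^^ N) (\<lambda>x. 0) = (\<lambda>x. 0)"
  using twisted_diff_sum[where F="\<lambda>_ _. 0" and I="{}"] by simp

lemma twisted_diff_same: "(twisted_diff \<nu> \<nu> i ^^ N) g = (\<lambda>x. \<nu> ^ N * (diff_op i ^^ N) g x)"
proof (induction N)
  case 0 thus ?case by simp
next
  case (Suc N)
  show ?case
    by (rule ext) (simp add: twisted_diff_pow_Suc_apply diff_op_pow_Suc_apply Suc algebra_simps del: funpow.simps)
qed

lemma nilpotent_twisted_diff1:
  assumes "g \<in> nilpotent_signals"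
  shows "twisted_diff a b i g \<in> nilpotent_signals"
proof -
  have "twisted_diff a b i g = (\<lambda>x. a * g (\<lambda>j. x j + (if j = i then 1 else 0)) + (- b) * g x)"
    by (simp add: twisted_diff_def upd_as_shift)
  thus ?thesis by (simp only:) (intro nilpotent_add nilpotent_scale nilpotent_shift assms)
qed

lemma nilpotent_twisted_diff:
  "g \<in> nilpotent_signals \<Longrightarrow> (twisted_diff a b i ^^ N) g \<in> nilpotent_signals"
  by (induction N) (simp_all add: nilpotent_twisted_diff1)

text \<open>For \<open>a \<noteq> b\<close>, \<open>a \<noteq> 0\<close> the operator is injective on nilpotent signals: a
  nonzero solution of \<open>g(x + e\<^sub>i) = (b/a) g(x)\<close> is an eigenvector of \<open>\<Delta>\<^sub>i\<close> with the
  nonzero eigenvalue \<open>b/a - 1\<close>, so no power of \<open>\<Delta>\<^sub>i\<close> kills it.\<close>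
lemma twisted_diff_inj:
  fixes g :: "('n::finite, 'a::field) signal"
  assumes g: "g \<in> nilpotent_signals" and ab: "a \<noteq> b" "a \<noteq> 0"
    and z: "twisted_diff a b i g = (\<lambda>x. 0)"
  shows "g = (\<lambda>x. 0)"
proof -
  define \<rho> where "\<rho> = b / a"
  have \<rho>: "\<rho> - 1 \<noteq> 0" using ab unfolding \<rho>_def by (simp add: field_simps)
  have step: "g (x(i := Suc (x i))) = \<rho> * g x" for x
    using fun_cong[OF z, of x] ab unfolding \<rho>_def twisted_diff_def by (simp add: field_simps)
  have eigen: "diff_op i g = (\<lambda>x. (\<rho> - 1) * g x)"
    by (rule ext) (simp add: diff_op_def step algebra_simps)
  have eigen_pow: "(diff_op i ^^ k) g = (\<lambda>x. (\<rho> - 1) ^ k * g x)" for k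
  proof (induction k)
    case 0 thus ?case by simp
  next
    case (Suc k)
    have "(diff_op i ^^ Suc k) g = (diff_op i ^^ k) (diff_op i g)"
      by (simp add: funpow_Suc_right del: funpow.simps)
    also have "\<dots> = (\<lambda>x. (\<rho> - 1) ^ Suc k * g x)"
      unfolding eigen diff_op_pow_scale Suc by (simp add: mult.assoc)
    finally show ?case .
  qed
  obtain N where "(diff_op i ^^ N) g = (\<lambda>x. 0)" using g unfolding nilpotent_signals_def by blast
  thus ?thesis using \<rho> unfolding eigen_pow by (simp add: fun_eq_iff)
qed

lemma twisted_diff_pow_inj:
  fixes g :: "('n::finite, 'a::field) signal"
  assumes "g \<in> nilpotent_signals" "a \<noteq> b" "a \<noteq> 0" "(twisted_diff a b i ^^ N) g = (\<lambda>x. 0)"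
  shows "g = (\<lambda>x. 0)"
  using assms
proof (induction N arbitrary: g)
  case 0 thus ?case by simp
next
  case (Suc N)
  have "(twisted_diff a b i ^^ N) (twisted_diff a b i g) = (\<lambda>x. 0)"
    using Suc.prems(4) by (simp add: funpow_Suc_right del: funpow.simps)
  hence "twisted_diff a b i g = (\<lambda>x. 0)"
    using Suc.IH Suc.prems(1-3) nilpotent_twisted_diff1 by blast
  thus ?case using twisted_diff_inj Suc.prems by blast
qed

lemma expfun_nonzero: "\<forall>j. lam j \<noteq> (0::'a::field) \<Longrightarrow> expfun lam (x :: 'n::finite \<Rightarrow> nat) \<noteq> 0"
  unfolding expfun_def tpow_def by simp

text \<open>Induction
  on the number of terms: to remove \<open>c\<^sub>1 \<noteq> c\<^sub>0\<close>, choose a coordinate i where the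
  exponents differ and apply a power of \<open>E\<^sub>i - \<mu>\<^sub>c\<^sub>1\<^sub>,\<^sub>i\<close>, which kills the \<open>c\<^sub>1\<close> term and
  is injective on the \<open>c\<^sub>0\<close> term.\<close>
lemma exp_independent:
  fixes g :: "'c \<Rightarrow> ('n::finite, 'a::field) signal"
  assumes "finite I" "\<forall>c\<in>I. g c \<in> nilpotent_signals" "\<forall>c\<in>I. \<forall>j. \<mu> c j \<noteq> 0" "inj_on \<mu> I"
    "\<forall>x. (\<Sum>c\<in>I. expfun (\<mu> c) x * g c x) = 0" "c0 \<in> I"
  shows "g c0 = (\<lambda>x. 0)"
  using assms
proof (induction "card I" arbitrary: I g c0 rule: less_induct)
  case less
  show ?case
  proof (cases "I = {c0}")
    case True
    have "expfun (\<mu> c0) x * g c0 x = 0" for x using less.prems(5) True by simp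
    moreover have "expfun (\<mu> c0) x \<noteq> 0" for x using expfun_nonzero less.prems(3,6) by blast
    ultimately show ?thesis by (simp add: fun_eq_iff)
  next
    case False
    then obtain c1 where c1: "c1 \<in> I" "c1 \<noteq> c0" using less.prems(6) by blast
    have "\<mu> c0 \<noteq> \<mu> c1" using less.prems(4,6) c1 by (metis inj_on_eq_iff)
    then obtain i where i: "\<mu> c0 i \<noteq> \<mu> c1 i" by blast
    obtain N where N: "(diff_op i ^^ N) (g c1) = (\<lambda>x. 0)"
      using less.prems(2) c1 unfolding nilpotent_signals_def by blast
    define g' where "g' c = (twisted_diff (\<mu> c i) (\<mu> c1 i) i ^^ N) (g c)" for c
    have "(twisted_diff 1 (\<mu> c1 i) i ^^ N) (\<lambda>x. \<Sum>c\<in>I. expfun (\<mu> c) x * g c x)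
          = (twisted_diff 1 (\<mu> c1 i) i ^^ N) (\<lambda>x. 0)"
      using less.prems(5) by simp
    hence transformed: "\<forall>x. (\<Sum>c\<in>I. expfun (\<mu> c) x * g' c x) = 0"
      unfolding twisted_diff_sum twisted_diff_exp twisted_diff_pow_zero g'_def by (simp add: fun_eq_iff)
    have "g' c1 = (\<lambda>x. 0)"
      unfolding g'_def twisted_diff_same N by simp
    hence "\<forall>x. (\<Sum>c\<in>I - {c1}. expfun (\<mu> c) x * g' c x) = 0"
      using transformed sum.remove[OF less.prems(1) c1(1), of "\<lambda>c. expfun (\<mu> c) _ * g' c _"] by simp
    hence "g' c0 = (\<lambda>x. 0)"
      using less.prems c1 card_Diff1_less[OF less.prems(1) c1(1)]
      by (intro less.hyps[of "I - {c1}" g' c0])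
         (auto simp: g'_def nilpotent_twisted_diff intro: inj_on_subset)
    thus ?thesis
      using twisted_diff_pow_inj[where g="g c0"] less.prems(2,3,6) i unfolding g'_def by blast
  qed
qed


lemma enum_bij:
  assumes "finite C"
  shows "bij_betw (enum C) {1..card C} C"
proof -
  let ?xs = "sorted_list_of_set C"
  have "bij_betw ((!) ?xs) {..<length ?xs} (set ?xs)"
    by (rule bij_betw_nth) auto
  hence "bij_betw ((!) ?xs) {..<card C} C" using assms by simp
  moreover have "bij_betw (\<lambda>j. j - 1) {1..card C} {..<card C}"
    by (rule bij_betw_byWitness[where f'=Suc]) auto
  ultimately have "bij_betw ((!) ?xs \<circ> (\<lambda>j. j - 1)) {1..card C} C"
    by (rule bij_betw_trans[rotated])
  moreover have "(!) ?xs \<circ> (\<lambda>j. j - 1) = enum C" by (rule ext) (simp add: enum_def)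
  ultimately show ?thesis by simp
qed

lemma enum_in: "finite C \<Longrightarrow> j \<in> {1..card C} \<Longrightarrow> enum C j \<in> C"
  using bij_betwE[OF enum_bij] by blast

lemma enum_first_in: "finite C \<Longrightarrow> C \<noteq> {} \<Longrightarrow> enum C 1 \<in> C"
  by (rule enum_in) (auto simp: card_gt_0_iff Suc_le_eq)

lemma phi_enum:
  assumes "finite C" "j \<in> {1..card C}"
  shows "phi C a (enum C j) = a j"
proof -
  have inj: "inj_on (enum C) {1..card C}" using enum_bij[OF assms(1)] bij_betw_def by blast
  have "phi C a (enum C j) = (\<Sum>j'\<in>{1..card C}. if j' = j then a j' else 0)"
    unfolding phi_def using inj_on_eq_iff[OF inj _ assms(2)] by (intro sum.cong) auto
  also have "\<dots> = a j" using assms(2) by simp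
  finally show ?thesis .
qed

lemma phi_outside: "finite C \<Longrightarrow> k \<notin> C \<Longrightarrow> phi C a k = 0"
  unfolding phi_def by (rule sum.neutral) (auto dest: enum_in)

section \<open>Direct sums over a partition\<close>

definition restr :: "'i set \<Rightarrow> ('i \<Rightarrow> 'b::zero) \<Rightarrow> 'i \<Rightarrow> 'b" where
  "restr C a = (\<lambda>k. if k \<in> C then a k else 0)"

lemma restr_partition_sum:
  fixes x :: "'i set \<Rightarrow> 'i \<Rightarrow> 'b::comm_monoid_add"
  assumes fin: "finite P" and disj: "\<forall>C\<in>P. \<forall>D\<in>P. C \<noteq> D \<longrightarrow> C \<inter> D = {}"
    and supp: "\<forall>D\<in>P. \<forall>k. k \<notin> D \<longrightarrow> x D k = 0" and C: "C \<in> P"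
  shows "restr C (\<lambda>k. \<Sum>D\<in>P. x D k) = x C"
proof
  fix k
  show "restr C (\<lambda>k. \<Sum>D\<in>P. x D k) k = x C k"
  proof (cases "k \<in> C")
    case True
    have "(\<Sum>D\<in>P - {C}. x D k) = 0"
      using disj supp C True by (intro sum.neutral) blast
    thus ?thesis using sum.remove[OF fin C, of "\<lambda>D. x D k"] True by (simp add: restr_def)
  next
    case False
    thus ?thesis using supp C by (simp add: restr_def)
  qed
qed

lemma partition_sum_restr:
  fixes a :: "'i \<Rightarrow> 'b::comm_monoid_add"
  assumes fin: "finite P" and disj: "\<forall>C\<in>P. \<forall>D\<in>P. C \<noteq> D \<longrightarrow> C \<inter> D = {}"
    and supp: "\<forall>k. k \<notin> \<Union>P \<longrightarrow> a k = 0"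
  shows "(\<lambda>k. \<Sum>C\<in>P. restr C a k) = a"
proof
  fix k
  show "(\<Sum>C\<in>P. restr C a k) = a k"
  proof (cases "k \<in> \<Union>P")
    case True
    then obtain C where C: "C \<in> P" "k \<in> C" by blast
    have "restr C (\<lambda>k. \<Sum>D\<in>P. restr D a k) = restr C a"
      using restr_partition_sum[OF fin disj _ C(1), of "\<lambda>D. restr D a"] by (simp add: restr_def)
    from fun_cong[OF this, of k] show ?thesis using C(2) by (simp add: restr_def)
  next
    case False
    thus ?thesis using supp by (auto simp: restr_def intro: sum.neutral)
  qed
qed

lemma partition_sum_decomposition:
  fixes V :: "'i set \<Rightarrow> ('i \<Rightarrow> 'b::comm_monoid_add) set"
  assumes fin: "finite P" and disj: "\<forall>C\<in>P. \<forall>D\<in>P. C \<noteq> D \<longrightarrow> C \<inter> D = {}"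
    and V: "\<forall>C\<in>P. \<forall>b\<in>V C. \<forall>k. k \<notin> C \<longrightarrow> b k = 0"
  shows "{a. (\<forall>k. k \<notin> \<Union>P \<longrightarrow> a k = 0) \<and> (\<forall>C\<in>P. restr C a \<in> V C)}
           = {(\<lambda>k. \<Sum>C\<in>P. x C k) | x. \<forall>C\<in>P. x C \<in> V C}"
proof (intro equalityI subsetI)
  fix a assume "a \<in> {a. (\<forall>k. k \<notin> \<Union>P \<longrightarrow> a k = 0) \<and> (\<forall>C\<in>P. restr C a \<in> V C)}"
  hence supp: "\<forall>k. k \<notin> \<Union>P \<longrightarrow> a k = 0" and restr: "\<forall>C\<in>P. restr C a \<in> V C" by auto
  show "a \<in> {(\<lambda>k. \<Sum>C\<in>P. x C k) | x. \<forall>C\<in>P. x C \<in> V C}"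
    using partition_sum_restr[OF fin disj supp] restr by (intro CollectI exI[of _ "\<lambda>C. restr C a"]) auto
next
  fix a assume "a \<in> {(\<lambda>k. \<Sum>C\<in>P. x C k) | x. \<forall>C\<in>P. x C \<in> V C}"
  then obtain x where a: "a = (\<lambda>k. \<Sum>C\<in>P. x C k)" and x: "\<forall>C\<in>P. x C \<in> V C" by blast
  have supp: "\<forall>D\<in>P. \<forall>k. k \<notin> D \<longrightarrow> x D k = 0" using V x by blast
  have "a k = 0" if "k \<notin> \<Union>P" for k
    unfolding a using supp that by (intro sum.neutral) blast
  moreover have "restr C a \<in> V C" if "C \<in> P" for C
    unfolding a restr_partition_sum[OF fin disj supp that] using x that by blast
  ultimately show "a \<in> {a. (\<forall>k. k \<notin> \<Union>P \<longrightarrow> a k = 0) \<and> (\<forall>C\<in>P. restr C a \<in> V C)}" by blast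
qed

lemma partition_sum_direct:
  fixes V :: "'i set \<Rightarrow> ('i \<Rightarrow> 'b::comm_monoid_add) set"
  assumes fin: "finite P" and disj: "\<forall>C\<in>P. \<forall>D\<in>P. C \<noteq> D \<longrightarrow> C \<inter> D = {}"
    and V: "\<forall>C\<in>P. \<forall>b\<in>V C. \<forall>k. k \<notin> C \<longrightarrow> b k = 0"
    and x: "\<forall>C\<in>P. x C \<in> V C" and zero: "(\<lambda>k. \<Sum>C\<in>P. x C k) = (\<lambda>k. 0)"
  shows "\<forall>C\<in>P. x C = (\<lambda>k. 0)"
proof
  fix C assume C: "C \<in> P"
  have "\<forall>D\<in>P. \<forall>k. k \<notin> D \<longrightarrow> x D k = 0" using V x by blast
  from restr_partition_sum[OF fin disj this C] show "x C = (\<lambda>k. 0)"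
    unfolding zero by (simp add: restr_def fun_eq_iff)
qed


lemma index_classes_image: "index_classes m lam = (\<lambda>j. {k \<in> {1..m}. lam k = lam j}) ` {1..m}"
  unfolding index_classes_def by (rule Setcompr_eq_image)

lemma index_classes_finite: "finite (index_classes m lam)"
  unfolding index_classes_image by simp

lemma index_class_subset: "C \<in> index_classes m lam \<Longrightarrow> C \<subseteq> {1..m}"
  unfolding index_classes_def by auto

lemma index_class_finite: "C \<in> index_classes m lam \<Longrightarrow> finite C"
  using finite_subset[OF index_class_subset] by blast

lemma index_class_eq: "C \<in> index_classes m lam \<Longrightarrow> k \<in> C \<Longrightarrow> C = {k' \<in> {1..m}. lam k' = lam k}"
  unfolding index_classes_def by auto

lemma index_class_rep: "C \<in> index_classes m lam \<Longrightarrow> enum C 1 \<in> C"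
  by (rule enum_first_in[OF index_class_finite]) (auto simp: index_classes_def)

lemma index_class_exponent: "C \<in> index_classes m lam \<Longrightarrow> k \<in> C \<Longrightarrow> lam k = lam (enum C 1)"
  using index_class_eq index_class_rep by blast

lemma index_classes_disjoint:
  "\<forall>C\<in>index_classes m lam. \<forall>D\<in>index_classes m lam. C \<noteq> D \<longrightarrow> C \<inter> D = {}"
  using index_class_eq by blast

lemma index_classes_union: "\<Union>(index_classes m lam) = {1..m}"
proof
  show "\<Union>(index_classes m lam) \<subseteq> {1..m}" using index_class_subset by blast
  show "{1..m} \<subseteq> \<Union>(index_classes m lam)"
  proof
    fix k assume "k \<in> {1..m}"
    thus "k \<in> \<Union>(index_classes m lam)" unfolding index_classes_image by (intro UN_I[of k]) auto
  qed
qed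

lemma index_classes_exponent_inj: "inj_on (\<lambda>C. lam (enum C 1)) (index_classes m lam)"
proof (rule inj_onI)
  fix C D assume C: "C \<in> index_classes m lam" and D: "D \<in> index_classes m lam"
    and same: "lam (enum C 1) = lam (enum D 1)"
  have "C = {k \<in> {1..m}. lam k = lam (enum C 1)}" by (rule index_class_eq[OF C index_class_rep[OF C]])
  moreover have "D = {k \<in> {1..m}. lam k = lam (enum D 1)}" by (rule index_class_eq[OF D index_class_rep[OF D]])
  ultimately show "C = D" using same by simp
qed

section \<open>The kernel of \<open>\<kappa>\<^sub>p\<close>\<close>

text \<open>The polynomial part of the action of a row vector a on the class C after
  factoring out \<open>exp\<^sub>\<mu>\<close>: \<open>\<Sum>\<^sub>k\<^sub>\<in>\<^sub>C \<chi>\<^bsub>1/\<mu>\<^esub>(a\<^sub>k) \<bullet> p\<^sub>k\<close>.\<close>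
definition twisted_sum :: "(nat \<Rightarrow> ('n::finite, 'a::field) mpoly) \<Rightarrow> ('n \<Rightarrow> 'a) \<Rightarrow> nat set
    \<Rightarrow> (nat \<Rightarrow> ('n, 'a) sop) \<Rightarrow> ('n, 'a) signal" where
  "twisted_sum p \<mu> C a = (\<lambda>x. \<Sum>k\<in>C. sop_act (chi (\<lambda>i. inverse (\<mu> i)) (a k)) (polyfun (p k)) x)"

definition class_kernel :: "(nat \<Rightarrow> ('n::finite, 'a::field) mpoly) \<Rightarrow> ('n \<Rightarrow> 'a) \<Rightarrow> nat set
    \<Rightarrow> (nat \<Rightarrow> ('n, 'a) sop) set" where
  "class_kernel p \<mu> C = {b. (\<forall>k. k \<notin> C \<longrightarrow> b k = 0) \<and> twisted_sum p \<mu> C b = (\<lambda>x. 0)}"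

lemma twisted_sum_restr: "twisted_sum p \<mu> C (restr C a) = twisted_sum p \<mu> C a"
  unfolding twisted_sum_def restr_def by simp

lemma pvec_action_regroup:
  "(\<Sum>k=1..m. sop_act (a k) (pvec m p lam k) x) =
   (\<Sum>C\<in>index_classes m lam. expfun (lam (enum C 1)) x * twisted_sum p (lam (enum C 1)) C a x)"
proof -
  have "(\<Sum>k=1..m. sop_act (a k) (pvec m p lam k) x) =
        (\<Sum>C\<in>index_classes m lam. \<Sum>k\<in>C. sop_act (a k) (pvec m p lam k) x)"
  proof -
    have "\<forall>C\<in>index_classes m lam. finite C" using index_class_finite by blast
    from sum.Union_disjoint[OF this index_classes_disjoint]
    show ?thesis by (simp only: index_classes_union comp_apply)
  qed
  also have "\<dots> = (\<Sum>C\<in>index_classes m lam. expfun (lam (enum C 1)) x * twisted_sum p (lam (enum C 1)) C a x)"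
    unfolding twisted_sum_def sum_distrib_left
  proof (intro sum.cong refl)
    fix C k assume C: "C \<in> index_classes m lam" and k: "k \<in> C"
    have "pvec m p lam k = (\<lambda>y. polyfun (p k) y * expfun (lam (enum C 1)) y)"
      using index_class_subset[OF C] k index_class_exponent[OF C k] unfolding pvec_def by auto
    thus "sop_act (a k) (pvec m p lam k) x =
          expfun (lam (enum C 1)) x * sop_act (chi (\<lambda>i. inverse (lam (enum C 1) i)) (a k)) (polyfun (p k)) x"
      by (simp add: sop_act_exp)
  qed
  finally show ?thesis .
qed

text \<open>Main computation: by independence of exponentials, a row lies in \<open>ker(\<kappa>\<^sub>p)\<close>
  iff each of its class restrictions lies in the corresponding class kernel.\<close>
lemma ker_kappa_pvec_iff:
  assumes nz: "\<forall>j\<in>{1..m}. \<forall>i. lam j i \<noteq> 0"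
  shows "a \<in> ker_kappa m (pvec m p lam) \<longleftrightarrow> (\<forall>k. k \<notin> {1..m} \<longrightarrow> a k = 0) \<and>
           (\<forall>C\<in>index_classes m lam. restr C a \<in> class_kernel p (lam (enum C 1)) C)"
proof -
  let ?cls = "index_classes m lam" and ?\<mu> = "\<lambda>C. lam (enum C 1)"
  have restr_iff: "restr C a \<in> class_kernel p (?\<mu> C) C \<longleftrightarrow> twisted_sum p (?\<mu> C) C a = (\<lambda>x. 0)" for C
    using twisted_sum_restr[of p "?\<mu> C" C a] unfolding class_kernel_def by (simp add: restr_def)
  have "(\<forall>x. (\<Sum>C\<in>?cls. expfun (?\<mu> C) x * twisted_sum p (?\<mu> C) C a x) = 0)
        \<longleftrightarrow> (\<forall>C\<in>?cls. twisted_sum p (?\<mu> C) C a = (\<lambda>x. 0))"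
  proof
    assume zero: "\<forall>x. (\<Sum>C\<in>?cls. expfun (?\<mu> C) x * twisted_sum p (?\<mu> C) C a x) = 0"
    have nil: "\<forall>C\<in>?cls. twisted_sum p (?\<mu> C) C a \<in> nilpotent_signals"
      unfolding twisted_sum_def by (intro ballI nilpotent_sum nilpotent_sop_act nilpotent_polyfun)
    have nz': "\<forall>C\<in>?cls. \<forall>i. ?\<mu> C i \<noteq> 0"
      using nz index_class_rep index_class_subset by blast
    show "\<forall>C\<in>?cls. twisted_sum p (?\<mu> C) C a = (\<lambda>x. 0)"
      using exp_independent[OF index_classes_finite nil nz' index_classes_exponent_inj zero] by blast
  qed simp
  thus ?thesis
    unfolding ker_kappa_def rowvecs_def restr_iff fun_eq_iff pvec_action_regroup by auto
qed

lemma twisted_sum_phi: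
  assumes C: "finite C" and nz: "\<forall>i. \<mu> i \<noteq> 0"
  shows "twisted_sum p \<mu> C (phi C (chi_vec \<mu> b)) x = (\<Sum>j=1..card C. sop_act (b j) (polyfun (p (enum C j))) x)"
proof -
  have "twisted_sum p \<mu> C (phi C (chi_vec \<mu> b)) x =
      (\<Sum>j=1..card C. sop_act (chi (\<lambda>i. inverse (\<mu> i)) (phi C (chi_vec \<mu> b) (enum C j))) (polyfun (p (enum C j))) x)"
    unfolding twisted_sum_def by (rule sum.reindex_bij_betw[OF enum_bij[OF C], symmetric])
  also have "\<dots> = (\<Sum>j=1..card C. sop_act (b j) (polyfun (p (enum C j))) x)"
  proof (intro sum.cong refl)
    fix j assume j: "j \<in> {1..card C}"
    have "phi C (chi_vec \<mu> b) (enum C j) = chi \<mu> (b j)"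
      using phi_enum[OF C j] by (simp add: chi_vec_def)
    thus "sop_act (chi (\<lambda>i. inverse (\<mu> i)) (phi C (chi_vec \<mu> b) (enum C j))) (polyfun (p (enum C j))) x
          = sop_act (b j) (polyfun (p (enum C j))) x"
      using chi_inverse_right[OF nz] by simp
  qed
  finally show ?thesis .
qed

text \<open>The summand \<open>\<phi>\<^sub>C(H\<^sub>C)\<close> of the theorem is the class kernel of C: \<open>\<phi>\<^sub>C\<close> and
  \<open>\<chi>\<^sub>\<mu>\<close> identify \<open>ker(\<kappa>\<^sub>h\<^sub>C)\<close> with the vectors supported on C killed by the
  twisted action.\<close>
lemma phi_chi_ker_kappa:
  assumes C: "finite C" and nz: "\<forall>i. \<mu> i \<noteq> 0"
  shows "phi C ` chi_vec \<mu> ` ker_kappa (card C) (\<lambda>j. polyfun (p (enum C j))) = class_kernel p \<mu> C"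
proof (intro equalityI subsetI)
  let ?h = "\<lambda>j. polyfun (p (enum C j))"
  fix b assume "b \<in> phi C ` chi_vec \<mu> ` ker_kappa (card C) ?h"
  then obtain a where a: "a \<in> ker_kappa (card C) ?h" and b: "b = phi C (chi_vec \<mu> a)"
    by blast
  have "(\<lambda>x. \<Sum>j=1..card C. sop_act (a j) (?h j) x) = (\<lambda>x. 0)"
    using a unfolding ker_kappa_def by blast
  hence "twisted_sum p \<mu> C b = (\<lambda>x. 0)"
    unfolding b fun_eq_iff twisted_sum_phi[OF C nz] .
  thus "b \<in> class_kernel p \<mu> C"
    unfolding class_kernel_def b using phi_outside[OF C] by blast
next
  let ?h = "\<lambda>j. polyfun (p (enum C j))"
  fix b assume b: "b \<in> class_kernel p \<mu> C"
  define a where "a j = (if j \<in> {1..card C} then chi (\<lambda>i. inverse (\<mu> i)) (b (enum C j)) else 0)" for j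
  have b_eq: "b = phi C (chi_vec \<mu> a)"
  proof
    fix k
    show "b k = phi C (chi_vec \<mu> a) k"
    proof (cases "k \<in> C")
      case True
      then obtain j where j: "j \<in> {1..card C}" "k = enum C j"
        using bij_betw_imp_surj_on[OF enum_bij[OF C]] by blast
      have "phi C (chi_vec \<mu> a) k = chi_vec \<mu> a j"
        using phi_enum[OF C j(1)] j(2) by simp
      also have "\<dots> = chi \<mu> (chi (\<lambda>i. inverse (\<mu> i)) (b k))"
        using j by (simp add: chi_vec_def a_def)
      also have "\<dots> = b k" by (rule chi_inverse_left[OF nz])
      finally show ?thesis by simp
    next
      case False
      thus ?thesis using b phi_outside[OF C] unfolding class_kernel_def by simp
    qed
  qed
  have "twisted_sum p \<mu> C b = (\<lambda>x. 0)"
    using b unfolding class_kernel_def by blast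
  hence "(\<lambda>x. \<Sum>j=1..card C. sop_act (a j) (?h j) x) = (\<lambda>x. 0)"
    unfolding b_eq fun_eq_iff twisted_sum_phi[OF C nz] .
  moreover have "a \<in> rowvecs (card C)"
    unfolding rowvecs_def a_def by simp
  ultimately have "a \<in> ker_kappa (card C) ?h"
    unfolding ker_kappa_def by blast
  thus "b \<in> phi C ` chi_vec \<mu> ` ker_kappa (card C) ?h"
    unfolding b_eq by blast
qed

lemma phi_class_H:
  assumes nz: "\<forall>j\<in>{1..m}. \<forall>i. lam j i \<noteq> 0" and C: "C \<in> index_classes m lam"
  shows "phi C ` class_H p lam C = class_kernel p (lam (enum C 1)) C"
proof -
  have "\<forall>i. lam (enum C 1) i \<noteq> 0"
    using nz index_class_rep[OF C] index_class_subset[OF C] by blast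
  from phi_chi_ker_kappa[OF index_class_finite[OF C] this] show ?thesis
    unfolding class_H_def .
qed

lemma ker_kappa_pvec_restrictions:
  assumes nz: "\<forall>j\<in>{1..m}. \<forall>i. lam j i \<noteq> 0"
  shows "ker_kappa m (pvec m p lam) = {a. (\<forall>k. k \<notin> \<Union>(index_classes m lam) \<longrightarrow> a k = 0) \<and>
           (\<forall>C\<in>index_classes m lam. restr C a \<in> phi C ` class_H p lam C)}"
  by (rule set_eqI) (simp add: ker_kappa_pvec_iff[OF nz] phi_class_H[OF nz] index_classes_union)

section \<open>Kernel representations of the VMPUM\<close>

text \<open>Every element of the row module of R annihilates every solution of \<open>R w = 0\<close>:
  the action is a module action, so S-combinations of annihilating rows annihilate.\<close>
lemma row_module_annihilates:
  assumes v: "v \<in> behav g m R" and \<rho>: "\<rho> \<in> row_module g m R"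
  shows "(\<lambda>x. \<Sum>j=1..m. sop_act (\<rho> j) (v j) x) = (\<lambda>x. 0)"
proof
  fix x
  obtain c where c: "\<rho> = (\<lambda>j. if j \<in> {1..m} then (\<Sum>r=1..g. sop_mult (c r) (R r j)) else 0)"
    using \<rho> unfolding row_module_def by blast
  have rows: "\<forall>r\<in>{1..g}. (\<lambda>y. \<Sum>j=1..m. sop_act (R r j) (v j) y) = (\<lambda>y. 0)"
    using v unfolding behav_def by simp
  have "(\<Sum>j=1..m. sop_act (\<rho> j) (v j) x) = (\<Sum>j=1..m. \<Sum>r=1..g. sop_act (c r) (sop_act (R r j) (v j)) x)"
    unfolding c by (intro sum.cong) (simp_all add: sop_act_sum sop_act_mult)
  also have "\<dots> = (\<Sum>r=1..g. sop_act (c r) (\<lambda>y. \<Sum>j=1..m. sop_act (R r j) (v j) y) x)"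
    unfolding sop_act_signal_sum by (rule sum.swap)
  also have "\<dots> = 0"
    using rows by (simp add: sop_act_signal_zero)
  finally show "(\<Sum>j=1..m. sop_act (\<rho> j) (v j) x) = 0" .
qed

lemma sop_act_unit_combination:
  assumes "finite A" "r \<in> A"
  shows "sop_act (\<Sum>r'\<in>A. sop_mult (if r' = r then Poly_Mapping.single (\<lambda>_. 0, \<lambda>_. 0) 1 else 0) (b r')) f x
         = sop_act (b r) f x"
proof -
  have "sop_act (\<Sum>r'\<in>A. sop_mult (if r' = r then Poly_Mapping.single (\<lambda>_. 0, \<lambda>_. 0) 1 else 0) (b r')) f x
        = (\<Sum>r'\<in>A. if r' = r then sop_act (b r) f x else 0)"
    unfolding sop_act_sum by (intro sum.cong refl) (simp add: sop_act_mult sop_act_one)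
  thus ?thesis using assms by simp
qed

lemma behav_iff_row_module_subset:
  assumes w: "\<forall>j. j \<notin> {1..m} \<longrightarrow> w j = (\<lambda>x. 0)"
  shows "w \<in> behav g m R \<longleftrightarrow> row_module g m R \<subseteq> ker_kappa m w"
proof
  assume wb: "w \<in> behav g m R"
  show "row_module g m R \<subseteq> ker_kappa m w"
  proof
    fix \<rho> assume \<rho>: "\<rho> \<in> row_module g m R"
    have "\<rho> \<in> rowvecs m" using \<rho> unfolding row_module_def rowvecs_def by auto
    thus "\<rho> \<in> ker_kappa m w" unfolding ker_kappa_def using row_module_annihilates[OF wb \<rho>] by simp
  qed
next
  assume sub: "row_module g m R \<subseteq> ker_kappa m w"
  have rows: "(\<lambda>x. \<Sum>j=1..m. sop_act (R r j) (w j) x) = (\<lambda>x. 0)" if r: "r \<in> {1..g}" for r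
  proof -
    define \<rho> where "\<rho> = (\<lambda>j. if j \<in> {1..m} then (\<Sum>r'=1..g.
      sop_mult (if r' = r then Poly_Mapping.single (\<lambda>_. 0, \<lambda>_. 0) 1 else 0) (R r' j)) else 0)"
    have \<rho>: "\<rho> \<in> row_module g m R"
      unfolding row_module_def \<rho>_def
      by (intro CollectI exI[of _ "\<lambda>r'. if r' = r then Poly_Mapping.single (\<lambda>_. 0, \<lambda>_. 0) 1 else 0"]) simp
    have acts: "sop_act (\<rho> j) f x = sop_act (R r j) f x" if "j \<in> {1..m}" for j f x
      unfolding \<rho>_def using that sop_act_unit_combination[OF _ r, of "\<lambda>r'. R r' j"] by simp
    have "(\<lambda>x. \<Sum>j=1..m. sop_act (\<rho> j) (w j) x) = (\<lambda>x. 0)"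
      using sub \<rho> unfolding ker_kappa_def by blast
    thus ?thesis using acts by simp
  qed
  show "w \<in> behav g m R" unfolding behav_def using w rows by simp
qed

text \<open>If the rows of R generate \<open>ker(\<kappa>\<^sub>w)\<close>, then \<open>R w = 0\<close> is the smallest solution
  set containing w: any \<open>R'\<close> with \<open>R' w = 0\<close> has its rows in \<open>ker(\<kappa>\<^sub>w)\<close>, hence
  in the row module of R, so it annihilates every solution of \<open>R v = 0\<close>.\<close>
lemma vmpum_kernel_rep:
  assumes R: "row_module g m R = ker_kappa m w" and w: "\<forall>j. j \<notin> {1..m} \<longrightarrow> w j = (\<lambda>x. 0)"
  shows "is_vmpum_kernel_rep g m R w"
  unfolding is_vmpum_kernel_rep_def
proof (intro conjI allI impI subsetI)
  show "w \<in> behav g m R"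
    using R by (intro iffD2[OF behav_iff_row_module_subset[OF w]]) simp
next
  fix g' R' v assume w': "w \<in> behav g' m R'" and v: "v \<in> behav g m R"
  have v0: "\<forall>j. j \<notin> {1..m} \<longrightarrow> v j = (\<lambda>x. 0)" using v unfolding behav_def by simp
  have "row_module g' m R' \<subseteq> ker_kappa m w"
    by (rule iffD1[OF behav_iff_row_module_subset[OF w] w'])
  also have "\<dots> = row_module g m R" by (rule R[symmetric])
  also have "\<dots> \<subseteq> ker_kappa m v"
    by (rule iffD1[OF behav_iff_row_module_subset[OF v0] v])
  finally show "v \<in> behav g' m R'"
    by (rule iffD2[OF behav_iff_row_module_subset[OF v0]])
qed

theorem theorem6p4:
  fixes p :: "nat \<Rightarrow> ('n::finite, 'a::field) mpoly"
    and lam :: "nat \<Rightarrow> 'n \<Rightarrow> 'a"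
    and m :: nat
  assumes "infinite (UNIV :: 'a set)"
    and "\<forall>j\<in>{1..m}. \<forall>i. lam j i \<noteq> 0"
  shows "ker_kappa m (pvec m p lam) =
           {(\<lambda>k. \<Sum>C\<in>index_classes m lam. x C k) | x.
              \<forall>C\<in>index_classes m lam. x C \<in> phi C ` class_H p lam C} \<and>
         (\<forall>x. (\<forall>C\<in>index_classes m lam. x C \<in> phi C ` class_H p lam C) \<longrightarrow>
              (\<lambda>k. \<Sum>C\<in>index_classes m lam. x C k) = (\<lambda>k. 0) \<longrightarrow>
              (\<forall>C\<in>index_classes m lam. x C = (\<lambda>k. 0))) \<and>
         (\<forall>g R. row_module g m R = ker_kappa m (pvec m p lam) \<longrightarrow>
              is_vmpum_kernel_rep g m R (pvec m p lam))"
proof -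
  let ?cls = "index_classes m lam" and ?V = "\<lambda>C. phi C ` class_H p lam C"
  have V_supp: "\<forall>C\<in>?cls. \<forall>b\<in>?V C. \<forall>k. k \<notin> C \<longrightarrow> b k = 0"
  proof (intro ballI allI impI)
    fix C b k assume C: "C \<in> ?cls" and b: "b \<in> ?V C" and k: "k \<notin> C"
    from b show "b k = 0" unfolding phi_class_H[OF assms(2) C] class_kernel_def using k by blast
  qed
  have pvec_supp: "\<forall>j. j \<notin> {1..m} \<longrightarrow> pvec m p lam j = (\<lambda>x. 0)"
    unfolding pvec_def by simp
  show ?thesis
  proof (intro conjI allI impI)
    show "ker_kappa m (pvec m p lam) = {(\<lambda>k. \<Sum>C\<in>?cls. x C k) | x. \<forall>C\<in>?cls. x C \<in> ?V C}"
      unfolding ker_kappa_pvec_restrictions[OF assms(2)]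
      by (rule partition_sum_decomposition[OF index_classes_finite index_classes_disjoint V_supp])
  next
    fix x assume "\<forall>C\<in>?cls. x C \<in> ?V C" "(\<lambda>k. \<Sum>C\<in>?cls. x C k) = (\<lambda>k. 0)"
    then show "\<forall>C\<in>?cls. x C = (\<lambda>k. 0)"
      by (rule partition_sum_direct[OF index_classes_finite index_classes_disjoint V_supp])
  next
    fix g R assume "row_module g m R = ker_kappa m (pvec m p lam)"
    then show "is_vmpum_kernel_rep g m R (pvec m p lam)"
      by (rule vmpum_kernel_rep[OF _ pvec_supp])
  qed
qed

end
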